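(* Let $d\ge k\ge1$, $A\in\mathbb{R}^{d\times k}$ with $A^TA=I_k$, $\beta\in(0,1)$, $\theta^*=\sqrt{1-\beta}\,AA^T$, and let $\delta\in\mathbb{R}^{d\times d}$ and $\hat\theta:=\theta^*+\sqrt{1-\beta}\,\delta$. Let $m\in\{0,1\}^d$ and assume $\hat\lambda_{\max}:=\|(AA^T+\delta)D(m)\|<1$. Let $x_0$ be in the column space of $A$ and $x_1\in\mathbb{R}^d$ arbitrary. Define $$x_0^{(0)}=AA^Tx_1,\qquad x_0^{(r)}=\tfrac{1}{\sqrt{1-\beta}}\hat\theta\big(D(m)\,x_0^{(r-1)}+D(\mathbf 1-m)\,x_0\big)\quad(r\ge1).$$ Then for every $r\ge0$, $$\|x_0^{(r)}-x_0\|\le\hat\lambda_{\max}^r\left(\frac{\|\theta^*\|\,\|x_1-x_0\|}{\sqrt{1-\beta}}+\frac{\|\hat\theta-\theta^*\|\,\|x_0\|}{(1-\hat\lambda_{\max})\sqrt{1-\beta}}\right)+\frac{\|\hat\theta-\theta^*\|\,\|x_0\|}{(1-\hat\lambda_{\max})\sqrt{1-\beta}}.$$ *)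

theory Defs
  imports "HOL-Analysis.Analysis"
begin

definition diag_mat :: "real^'n \<Rightarrow> real^'n^'n" where
  "diag_mat v = (\<chi> i j. if i = j then v $ i else 0)"

definition opnorm :: "real^'n^'m \<Rightarrow> real" where
  "opnorm M = onorm (\<lambda>x. M *v x)"

end

theory Submission
  imports Defs
begin

text \<open>Because \<open>x\<^sub>0\<close> is fixed by the projection \<open>AA\<^sup>T\<close>, the error \<open>e\<^sub>r = x\<^sub>0\<^sup>(\<^sup>r\<^sup>) - x\<^sub>0\<close>
  obeys the affine recursion \<open>e\<^sub>r\<^sub>+\<^sub>1 = (AA\<^sup>T + \<delta>) D(m) e\<^sub>r + \<delta> x\<^sub>0\<close>, with \<open>e\<^sub>0 = AA\<^sup>T (x\<^sub>1 - x\<^sub>0)\<close>.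
  Taking norms gives \<open>\<parallel>e\<^sub>r\<^sub>+\<^sub>1\<parallel> \<le> \<lambda> \<parallel>e\<^sub>r\<parallel> + \<parallel>\<delta> x\<^sub>0\<parallel>\<close> with \<open>\<lambda> < 1\<close>, and unrolling this scalar
  recursion yields geometric convergence to within \<open>\<parallel>\<delta> x\<^sub>0\<parallel> / (1 - \<lambda>)\<close> of \<open>x\<^sub>0\<close>.\<close>

lemma opnorm_mult_vec_le: "norm (M *v x) \<le> opnorm M * norm x"
  unfolding opnorm_def by (rule onorm) simp

lemma opnorm_nonneg: "0 \<le> opnorm M"
  unfolding opnorm_def by (rule onorm_pos_le) simp

lemma diag_mat_mult_vec: "diag_mat v *v x = (\<chi> i. v $ i * x $ i)"
proof -
  have "(if i = j then v $ i else 0) * x $ j = (if i = j then v $ i * x $ j else 0)" for i j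
    by simp
  then show ?thesis
    by (simp add: vec_eq_iff matrix_vector_mult_def diag_mat_def)
qed

lemma diag_mat_complement_mult_vec: "diag_mat (1 - m) *v x = x - diag_mat m *v x"
  by (simp add: diag_mat_mult_vec vec_eq_iff algebra_simps)

lemma orthonormal_columns_projection_fixes_range:
  fixes A :: "real^'k^'d"
  assumes "transpose A ** A = mat 1"
  shows "(A ** transpose A) *v (A *v y) = A *v y"
  by (metis assms matrix_mul_assoc matrix_mul_rid matrix_vector_mul_assoc)

lemma masked_step_error:
  assumes "P *v x0 = x0"
  shows "(P + delta) *v (diag_mat m *v x + diag_mat (1 - m) *v x0) - x0
           = ((P + delta) ** diag_mat m) *v (x - x0) + delta *v x0"
  by (simp add: diag_mat_complement_mult_vec matrix_vector_mul_assoc algebra_simps assms)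

lemma masked_step_error_norm_le:
  assumes "P *v x0 = x0"
  shows "norm ((P + delta) *v (diag_mat m *v x + diag_mat (1 - m) *v x0) - x0)
           \<le> opnorm ((P + delta) ** diag_mat m) * norm (x - x0) + norm (delta *v x0)"
  unfolding masked_step_error[OF assms]
  using opnorm_mult_vec_le norm_triangle_le by (metis add_right_mono)

lemma affine_recurrence_bound:
  fixes u :: "nat \<Rightarrow> real"
  assumes step: "\<And>r. u (Suc r) \<le> lam * u r + c"
    and start: "u 0 \<le> E"
    and lam: "0 \<le> lam" "lam < 1" and c: "0 \<le> c"
  shows "u r \<le> lam ^ r * (E + c / (1 - lam)) + c / (1 - lam)"
proof (induction r)
  case 0
  have "0 \<le> c / (1 - lam)" using c lam by simp
  then show ?case using start by simp
next
  case (Suc r)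
  have "u (Suc r) \<le> lam * (lam ^ r * (E + c / (1 - lam)) + c / (1 - lam)) + c"
    using step[of r] Suc.IH lam(1) by (meson add_right_mono mult_left_mono order_trans)
  also have "\<dots> = lam ^ Suc r * (E + c / (1 - lam)) + (lam * (c / (1 - lam)) + c)"
    by (simp add: algebra_simps)
  also have "lam * (c / (1 - lam)) + c = c / (1 - lam)"
    using lam(2) by (simp add: field_simps)
  finally show ?case .
qed

theorem theorem3:
  fixes A :: "real^'k^'d" and beta :: real and delta :: "real^'d^'d"
    and m x0 x1 :: "real^'d" and xs :: "nat \<Rightarrow> real^'d"
    and thstar thhat :: "real^'d^'d" and lamhat :: real
  assumes dk: "CARD('k) \<le> CARD('d)"
    and orth: "transpose A ** A = mat 1"
    and beta: "0 < beta" "beta < 1"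
    and theta_star: "thstar = sqrt (1 - beta) *\<^sub>R (A ** transpose A)"
    and theta_hat: "thhat = thstar + sqrt (1 - beta) *\<^sub>R delta"
    and m01: "\<forall>i. m $ i = 0 \<or> m $ i = 1"
    and lam: "lamhat = opnorm ((A ** transpose A + delta) ** diag_mat m)"
    and lam1: "lamhat < 1"
    and x0col: "\<exists>y. x0 = A *v y"
    and xs0: "xs 0 = (A ** transpose A) *v x1"
    and xsSuc: "\<forall>r. xs (Suc r) = (1 / sqrt (1 - beta)) *\<^sub>R
                 (thhat *v (diag_mat m *v xs r + diag_mat (1 - m) *v x0))"
  shows "norm (xs r - x0) \<le>
           lamhat ^ r * (opnorm thstar * norm (x1 - x0) / sqrt (1 - beta)
              + opnorm (thhat - thstar) * norm x0 / ((1 - lamhat) * sqrt (1 - beta)))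
           + opnorm (thhat - thstar) * norm x0 / ((1 - lamhat) * sqrt (1 - beta))"
proof -
  define s where "s = sqrt (1 - beta)"
  define P where "P = A ** transpose A"
  have s: "0 < s" using beta by (simp add: s_def)
  have Px0: "P *v x0 = x0"
    using x0col orthonormal_columns_projection_fixes_range[OF orth] by (auto simp: P_def)
  define c where "c = opnorm (thhat - thstar) * norm x0 / s"
  have c: "0 \<le> c" using s opnorm_nonneg[of "thhat - thstar"] by (simp add: c_def)
  have delta_x0: "norm (delta *v x0) \<le> c"
    using opnorm_mult_vec_le[of "thhat - thstar" x0] s
    by (simp add: c_def theta_hat s_def scaleR_matrix_vector_assoc[symmetric] field_simps)
  have step: "norm (xs (Suc r) - x0) \<le> lamhat * norm (xs r - x0) + c" for r
  proof -
    have "xs (Suc r) = (P + delta) *v (diag_mat m *v xs r + diag_mat (1 - m) *v x0)"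
      using xsSuc s by (simp add: theta_hat theta_star P_def s_def
          scaleR_matrix_vector_assoc[symmetric] scaleR_right_distrib[symmetric])
    then show ?thesis
      using masked_step_error_norm_le[OF Px0, of delta m "xs r"] delta_x0
      by (simp add: lam P_def)
  qed
  have start: "norm (xs 0 - x0) \<le> opnorm thstar * norm (x1 - x0) / s"
  proof -
    have "s *\<^sub>R (xs 0 - x0) = thstar *v (x1 - x0)"
      using Px0 by (simp add: xs0 theta_star P_def s_def matrix_vector_mult_diff_distrib
          scaleR_matrix_vector_assoc[symmetric] scaleR_diff_right)
    then show ?thesis
      using opnorm_mult_vec_le[of thstar "x1 - x0"] s
      by (metis abs_of_pos norm_scaleR pos_le_divide_eq mult.commute)
  qed
  have "0 \<le> lamhat" using lam opnorm_nonneg by simp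
  from affine_recurrence_bound[OF step start this lam1 c]
  show ?thesis by (simp add: c_def s_def mult.commute)
qed

end
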